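(* Let $A$ be a finite nonempty set and let $M\le A^{A}$ be a monoid (under composition, containing $\mathrm{id}_A$). Then $M^{*}$ is a preclone, i.e., $\mathrm{id}_A\in M^{*}$ and $M^{*}$ is closed under the operations $\zeta$, $\tau$ and $\circ$. Moreover, $M^{*}$ is closed under $\nabla$ if and only if $C\subseteq M$, where $C=\{\mathbf c_a\mid a\in A\}$ is the set of all constant unary maps $\mathbf c_a(x)=a$.
   Context: $\mathrm{Op}(A)$ denotes the set of all operations $f:A^n\to A$, $n\ge 1$. For $f\in\mathrm{Op}(A)$ of arity $n$, $i\in\{1,\dots,n\}$ and $\mathbf a=(a_1,\dots,a_{i-1},a_{i+1},\dots,a_n)\in A^{n-1}$, the translation $f_{\mathbf a,i}$ is the unary map $x\mapsto f(a_1,\dots,a_{i-1},x,a_{i+1},\dots,a_n)$; $\mathrm{trl}(f)$ is the set of all such translations (for unary $f$, $\mathrm{trl}(f)=\{f\}$). For $M\subseteq A^A$, $M^{*}:=\{f\in\mathrm{Op}(A)\mid \mathrm{trl}(f)\subseteq M\}$. For $f$ $n$-ary and $g$ $m$-ary: $(\zeta f)(x_1,\dots,x_n)=f(x_2,\dots,x_n,x_1)$ (and $\zeta f=f$ if $n=1$); $(\tau f)(x_1,x_2,x_3,\dots,x_n)=f(x_2,x_1,x_3,\dots,x_n)$ (and $\tau f=f$ if $n=1$); $(f\circ g)(x_1,\dots,x_{m+n-1})=f(g(x_1,\dots,x_m),x_{m+1},\dots,x_{m+n-1})$; $(\nabla f)(x_1,\dots,x_{n+1})=f(x_2,\dots,x_{n+1})$.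 A preclone is a subset of $\mathrm{Op}(A)$ containing $\mathrm{id}_A$ and closed under $\zeta,\tau,\circ$. *)

theory Defs
  imports Main
begin

text \<open>The finite nonempty base set A is rendered as a type 'a of class finite (A = UNIV).
An n-ary operation A^n -> A is represented as a pair (n, f) with f acting on lists of
length n; outside length-n lists f is fixed to undefined, so that the representation
is unique (extensional).\<close>

type_synonym 'a op = "nat \<times> ('a list \<Rightarrow> 'a)"

definition Op :: "'a op set" where
  "Op = {(n, f). n \<ge> 1 \<and> (\<forall>xs. length xs \<noteq> n \<longrightarrow> f xs = undefined)}"


definition trl :: "'a op \<Rightarrow> ('a \<Rightarrow> 'a) set" where
  "trl F = {(\<lambda>x. snd F (take (i - 1) as @ x # drop (i - 1) as)) | as i.
              length as = fst F - 1 \<and> 1 \<le> i \<and> i \<le> fst F}"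

definition star :: "('a \<Rightarrow> 'a) set \<Rightarrow> 'a op set" where
  "star M = {F \<in> Op. trl F \<subseteq> M}"

definition id_op :: "'a op" where
  "id_op = (1, \<lambda>xs. if length xs = 1 then hd xs else undefined)"

definition zeta :: "'a op \<Rightarrow> 'a op" where
  "zeta F = (fst F, \<lambda>xs. if length xs = fst F then snd F (tl xs @ [hd xs]) else undefined)"

definition tau :: "'a op \<Rightarrow> 'a op" where
  "tau F = (if fst F = 1 then F else
     (fst F, \<lambda>xs. if length xs = fst F then snd F (xs ! 1 # xs ! 0 # drop 2 xs) else undefined))"

definition comp_op :: "'a op \<Rightarrow> 'a op \<Rightarrow> 'a op" where
  "comp_op F G = (fst G + fst F - 1,
     \<lambda>xs. if length xs = fst G + fst F - 1 then snd F (snd G (take (fst G) xs) # drop (fst G) xs)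
          else undefined)"

definition nabla :: "'a op \<Rightarrow> 'a op" where
  "nabla F = (fst F + 1, \<lambda>xs. if length xs = fst F + 1 then snd F (tl xs) else undefined)"

definition preclone :: "'a op set \<Rightarrow> bool" where
  "preclone P \<longleftrightarrow> P \<subseteq> Op \<and> id_op \<in> P \<and> (\<forall>F\<in>P. zeta F \<in> P) \<and> (\<forall>F\<in>P. tau F \<in> P)
     \<and> (\<forall>F\<in>P. \<forall>G\<in>P. comp_op F G \<in> P)"

end

theory Submission
  imports Defs
begin

text \<open>Everything reduces to computing translations. A translation of \<zeta>F or \<tau>F is a
translation of F, since both only permute arguments. A translation of F \<circ> G is a translation
of F when the free variable lies outside the block of G, and otherwise a translation of F applied
after a translation of G. A translation of \<nabla>F is a translation of F or, when the free
variable is the dummy argument, a constant map; conversely every constant map is a translation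
of \<nabla>id.\<close>

lemma trl_eq:
  "trl F = {(\<lambda>x. snd F (as @ x # bs)) | as bs. length as + length bs + 1 = fst F}"
proof (intro set_eqI iffI)
  fix h assume "h \<in> trl F"
  then obtain as i where h: "h = (\<lambda>x. snd F (take (i - 1) as @ x # drop (i - 1) as))"
    and l: "length as = fst F - 1" "1 \<le> i" "i \<le> fst F"
    unfolding trl_def by blast
  have "length (take (i - 1) as) + length (drop (i - 1) as) + 1 = fst F"
    using l by simp
  then show "h \<in> {(\<lambda>x. snd F (as @ x # bs)) | as bs. length as + length bs + 1 = fst F}"
    using h by blast
next
  fix h assume "h \<in> {(\<lambda>x. snd F (as @ x # bs)) | as bs. length as + length bs + 1 = fst F}"
  then obtain as bs where h: "h = (\<lambda>x. snd F (as @ x # bs))"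
    and l: "length as + length bs + 1 = fst F" by blast
  let ?i = "length as + 1"
  have "h = (\<lambda>x. snd F (take (?i - 1) (as @ bs) @ x # drop (?i - 1) (as @ bs)))"
    "length (as @ bs) = fst F - 1" "1 \<le> ?i" "?i \<le> fst F"
    using h l by simp_all
  then show "h \<in> trl F" unfolding trl_def by blast
qed

lemma translation_in_trl:
  "length as + length bs + 1 = fst F \<Longrightarrow> (\<lambda>x. snd F (as @ x # bs)) \<in> trl F"
  unfolding trl_eq by blast

lemma trl_subsetI:
  assumes "\<And>as bs. length as + length bs + 1 = fst F \<Longrightarrow> (\<lambda>x. snd F (as @ x # bs)) \<in> S"
  shows "trl F \<subseteq> S"
  using assms unfolding trl_eq by blast

lemma trl_id_op: "trl id_op = {id}"
  by (auto simp: trl_eq id_op_def intro!: exI[of _ "[]"])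

lemma trl_zeta_subset: "trl (zeta F) \<subseteq> trl F"
proof (rule trl_subsetI)
  fix as bs :: "'a list"
  assume l: "length as + length bs + 1 = fst (zeta F)"
  show "(\<lambda>x. snd (zeta F) (as @ x # bs)) \<in> trl F"
  proof (cases as)
    case Nil
    then have "(\<lambda>x. snd (zeta F) (as @ x # bs)) = (\<lambda>x. snd F (bs @ x # []))"
      using l by (auto simp: zeta_def)
    then show ?thesis using l Nil translation_in_trl[of bs "[]"] by (simp add: zeta_def)
  next
    case (Cons a as')
    then have "(\<lambda>x. snd (zeta F) (as @ x # bs)) = (\<lambda>x. snd F (as' @ x # bs @ [a]))"
      using l by (auto simp: zeta_def)
    then show ?thesis using l Cons translation_in_trl[of as' "bs @ [a]"] by (simp add: zeta_def)
  qed
qed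

lemma trl_tau_subset: "trl (tau F) \<subseteq> trl F"
proof (cases "fst F = 1")
  case True
  then show ?thesis by (simp add: tau_def)
next
  case False
  let ?swap = "\<lambda>xs. xs ! 1 # xs ! 0 # drop 2 xs"
  have snd_tau: "snd (tau F) xs = snd F (?swap xs)" if "length xs = fst F" for xs :: "'a list"
    using False that by (simp add: tau_def)
  show ?thesis
  proof (rule trl_subsetI)
    fix as bs :: "'a list"
    assume l: "length as + length bs + 1 = fst (tau F)"
    then have l': "length (as @ x # bs) = fst F" for x
      using False by (simp add: tau_def)
    have "\<exists>as' bs'. length as' + length bs' + 1 = fst F \<and> (\<forall>x. ?swap (as @ x # bs) = as' @ x # bs')"
    proof (cases as)
      case Nil
      with l False obtain b bs' where "bs = b # bs'" by (cases bs) (auto simp: tau_def)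
      with Nil l show ?thesis by (intro exI[of _ "[b]"] exI[of _ bs']) (auto simp: tau_def False)
    next
      case (Cons a as')
      show ?thesis
      proof (cases as')
        case Nil
        with \<open>as = a # as'\<close> l show ?thesis
          by (intro exI[of _ "[]"] exI[of _ "a # bs"]) (auto simp: tau_def False)
      next
        case (Cons a' as'')
        with \<open>as = a # as'\<close> l show ?thesis
          by (intro exI[of _ "a' # a # as''"] exI[of _ bs]) (auto simp: tau_def False)
      qed
    qed
    then obtain as' bs' where "length as' + length bs' + 1 = fst F"
      and "\<And>x. ?swap (as @ x # bs) = as' @ x # bs'" by blast
    then show "(\<lambda>x. snd (tau F) (as @ x # bs)) \<in> trl F"
      using translation_in_trl[of as' bs' F] by (simp add: snd_tau[OF l'])
  qed
qed

lemma trl_comp_op_subset: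
  assumes "1 \<le> fst F" and "1 \<le> fst G"
  shows "trl (comp_op F G) \<subseteq> trl F \<union> {f \<circ> g | f g. f \<in> trl F \<and> g \<in> trl G}"
proof (rule trl_subsetI)
  fix as bs :: "'a list"
  let ?m = "fst G"
  assume l: "length as + length bs + 1 = fst (comp_op F G)"
  then have len: "length as + length bs + 2 = ?m + fst F"
    using assms by (simp add: comp_op_def)
  have comp_at: "snd (comp_op F G) (as @ x # bs)
      = snd F (snd G (take ?m (as @ x # bs)) # drop ?m (as @ x # bs))" for x
    using l by (simp add: comp_op_def del: take_append drop_append)
  show "(\<lambda>x. snd (comp_op F G) (as @ x # bs))
      \<in> trl F \<union> {f \<circ> g | f g. f \<in> trl F \<and> g \<in> trl G}"
  proof (cases "length as < ?m")
    case True
    define k where "k = ?m - length as - 1"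
    have "(\<lambda>x. snd (comp_op F G) (as @ x # bs))
        = (\<lambda>y. snd F ([] @ y # drop k bs)) \<circ> (\<lambda>x. snd G (as @ x # take k bs))"
      using True by (simp add: comp_at k_def take_Cons' drop_Cons' comp_def)
    moreover have "(\<lambda>y. snd F ([] @ y # drop k bs)) \<in> trl F"
      using True len assms by (intro translation_in_trl) (simp add: k_def)
    moreover have "(\<lambda>x. snd G (as @ x # take k bs)) \<in> trl G"
      using True len assms by (intro translation_in_trl) (simp add: k_def)
    ultimately show ?thesis by blast
  next
    case False
    then have "(\<lambda>x. snd (comp_op F G) (as @ x # bs))
        = (\<lambda>x. snd F ((snd G (take ?m as) # drop ?m as) @ x # bs))"
      by (simp add: comp_at)
    moreover have "(\<lambda>x. snd F ((snd G (take ?m as) # drop ?m as) @ x # bs)) \<in> trl F"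
      using False len by (intro translation_in_trl) simp
    ultimately show ?thesis by simp
  qed
qed

lemma trl_nabla_subset: "trl (nabla F) \<subseteq> trl F \<union> range (\<lambda>a x. a)"
proof (rule trl_subsetI)
  fix as bs :: "'a list"
  assume l: "length as + length bs + 1 = fst (nabla F)"
  show "(\<lambda>x. snd (nabla F) (as @ x # bs)) \<in> trl F \<union> range (\<lambda>a x. a)"
  proof (cases as)
    case Nil
    then show ?thesis using l by (auto simp: nabla_def)
  next
    case (Cons a as')
    then have "(\<lambda>x. snd (nabla F) (as @ x # bs)) = (\<lambda>x. snd F (as' @ x # bs))"
      using l by (auto simp: nabla_def)
    then show ?thesis using l Cons translation_in_trl[of as' bs F] by (simp add: nabla_def)
  qed
qed

lemma const_in_trl_nabla_id_op: "(\<lambda>x. a) \<in> trl (nabla id_op)"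
  using translation_in_trl[of "[]" "[a]" "nabla id_op"] by (simp add: nabla_def id_op_def)

lemma mem_Op_iff:
  "F \<in> Op \<longleftrightarrow> 1 \<le> fst F \<and> (\<forall>xs. length xs \<noteq> fst F \<longrightarrow> snd F xs = undefined)"
  by (cases F) (simp add: Op_def)

lemma id_op_in_Op: "id_op \<in> Op"
  by (simp add: mem_Op_iff id_op_def)

lemma zeta_in_Op: "F \<in> Op \<Longrightarrow> zeta F \<in> Op"
  by (simp add: mem_Op_iff zeta_def)

lemma tau_in_Op: "F \<in> Op \<Longrightarrow> tau F \<in> Op"
  by (simp add: mem_Op_iff tau_def)

lemma comp_op_in_Op: "F \<in> Op \<Longrightarrow> G \<in> Op \<Longrightarrow> comp_op F G \<in> Op"
  by (auto simp: mem_Op_iff comp_op_def)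

lemma nabla_in_Op: "F \<in> Op \<Longrightarrow> nabla F \<in> Op"
  by (simp add: mem_Op_iff nabla_def)

lemma mem_star_iff: "F \<in> star M \<longleftrightarrow> F \<in> Op \<and> trl F \<subseteq> M"
  by (simp add: star_def)

lemma id_op_in_star: "id \<in> M \<Longrightarrow> id_op \<in> star M"
  by (simp add: mem_star_iff id_op_in_Op trl_id_op)

lemma preclone_star:
  assumes "id \<in> M" and "\<forall>f\<in>M. \<forall>g\<in>M. f \<circ> g \<in> M"
  shows "preclone (star M)"
  unfolding preclone_def
proof (intro conjI ballI)
  show "star M \<subseteq> Op" by (auto simp: mem_star_iff)
  show "id_op \<in> star M" using assms(1) by (rule id_op_in_star)
next
  fix F assume "F \<in> star M"
  then show "zeta F \<in> star M" and "tau F \<in> star M"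
    using trl_zeta_subset[of F] trl_tau_subset[of F]
    by (auto simp: mem_star_iff zeta_in_Op tau_in_Op)
next
  fix F G assume F: "F \<in> star M" and G: "G \<in> star M"
  then have "1 \<le> fst F" "1 \<le> fst G" by (simp_all add: mem_star_iff mem_Op_iff)
  then have "trl (comp_op F G) \<subseteq> trl F \<union> {f \<circ> g | f g. f \<in> trl F \<and> g \<in> trl G}"
    by (rule trl_comp_op_subset)
  also have "\<dots> \<subseteq> M"
    using F G assms(2) by (auto simp: mem_star_iff)
  finally show "comp_op F G \<in> star M"
    using F G by (simp add: mem_star_iff comp_op_in_Op)
qed

lemma star_closed_nabla_iff:
  assumes "id \<in> M"
  shows "(\<forall>F\<in>star M. nabla F \<in> star M) \<longleftrightarrow> range (\<lambda>a x. a) \<subseteq> M"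
proof
  assume "\<forall>F\<in>star M. nabla F \<in> star M"
  moreover have "id_op \<in> star M" using assms by (rule id_op_in_star)
  ultimately have "trl (nabla id_op) \<subseteq> M" by (simp add: mem_star_iff)
  then show "range (\<lambda>a x. a) \<subseteq> M"
    using const_in_trl_nabla_id_op by (intro image_subsetI) (rule subsetD)
next
  assume constants: "range (\<lambda>a x. a) \<subseteq> M"
  show "\<forall>F\<in>star M. nabla F \<in> star M"
  proof
    fix F assume "F \<in> star M"
    then have "F \<in> Op" and "trl F \<subseteq> M" by (simp_all add: mem_star_iff)
    then have "trl (nabla F) \<subseteq> M"
      using constants trl_nabla_subset[of F] by blast
    with \<open>F \<in> Op\<close> show "nabla F \<in> star M"
      by (simp add: mem_star_iff nabla_in_Op)
  qed
qed

theorem proposition2p5: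
  fixes M :: "('a::finite \<Rightarrow> 'a) set"
  assumes "id \<in> M" and "\<forall>f\<in>M. \<forall>g\<in>M. f \<circ> g \<in> M"
  shows "preclone (star M) \<and>
         ((\<forall>F\<in>star M. nabla F \<in> star M) \<longleftrightarrow> (\<forall>a::'a. (\<lambda>x. a) \<in> M))"
proof
  show "preclone (star M)" using assms by (rule preclone_star)
  have "range (\<lambda>a x. a) \<subseteq> M \<longleftrightarrow> (\<forall>a::'a. (\<lambda>x. a) \<in> M)" by blast
  then show "(\<forall>F\<in>star M. nabla F \<in> star M) \<longleftrightarrow> (\<forall>a::'a. (\<lambda>x. a) \<in> M)"
    using star_closed_nabla_iff[OF assms(1)] by simp
qed

end
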